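(* Let $N\ge1$, $S_N=\mathbb Z\cap[-N,N]$, $\beta\le2$, $\lambda=(\lambda_j)_{j\ge1}\in\ell^\beta$ and $(f_j)_{j\ge1}$ an orthonormal system in $L^2(\mathbf T)$. Then, with $C$ independent of $N$, $\lambda$, $(f_j)$, $$\Big\|\sum_{j=1}^\infty\lambda_j|\mathscr D_Nf_j|^2\Big\|_{L_t^2L_x^\infty(\mathbf T\times\mathbf T)}\le CN^{1/2}\|\lambda\|_{\ell^\beta}.$$
   Context: $\mathbf T=[0,2\pi)$, $\mathscr F_xf(k)=\frac1{2\pi}\int_{\mathbf T}e^{-ixk}f(x)\,dx$, and $\mathscr D_Nf(t,x)=\frac1{2\pi}\sum_{n\in S_N}\mathscr F_xf(n)e^{i(xn+t\sqrt{n^2+n^4})}$. *)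

theory Defs
  imports "HOL-Analysis.Analysis" "HOL-Probability.Essential_Supremum"
begin

definition torus :: "real set" where
  "torus = {0..<2*pi}"

definition fourier_coeff :: "(real \<Rightarrow> complex) \<Rightarrow> int \<Rightarrow> complex" where
  "fourier_coeff f k =
     (1 / (2 * pi)) * (LINT x:torus|lborel. exp (- \<i> * of_real x * of_int k) * f x)"

definition S_set :: "nat \<Rightarrow> int set" where
  "S_set N = {- int N .. int N}"

definition D_op :: "nat \<Rightarrow> (real \<Rightarrow> complex) \<Rightarrow> real \<Rightarrow> real \<Rightarrow> complex" where
  "D_op N f t x = (1 / (2 * pi)) *
     (\<Sum>n\<in>S_set N. fourier_coeff f n *
        exp (\<i> * of_real (x * of_int n + t * sqrt (of_int n ^ 2 + of_int n ^ 4))))"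

definition orthonormal_system :: "(nat \<Rightarrow> real \<Rightarrow> complex) \<Rightarrow> bool" where
  "orthonormal_system f \<longleftrightarrow>
     (\<forall>j. f j \<in> borel_measurable lborel \<and>
          set_integrable lborel torus (\<lambda>x. (norm (f j x))\<^sup>2)) \<and>
     (\<forall>j k. (LINT x:torus|lborel. f j x * cnj (f k x)) = (if j = k then 1 else 0))"

definition in_lp :: "real \<Rightarrow> (nat \<Rightarrow> real) \<Rightarrow> bool" where
  "in_lp \<beta> lam \<longleftrightarrow> summable (\<lambda>j. \<bar>lam j\<bar> powr \<beta>)"

definition lp_norm :: "real \<Rightarrow> (nat \<Rightarrow> real) \<Rightarrow> real" where
  "lp_norm \<beta> lam = (\<Sum>j. \<bar>lam j\<bar> powr \<beta>) powr (1 / \<beta>)"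

definition L2Linf_norm_sq :: "(real \<Rightarrow> real \<Rightarrow> real) \<Rightarrow> ennreal" where
  "L2Linf_norm_sq F =
     (\<integral>\<^sup>+ t. indicator torus t *
        (esssup (restrict_space lborel torus) (\<lambda>x. ennreal \<bar>F t x\<bar>))\<^sup>2 \<partial>lborel)"

end

theory Submission
  imports Defs
begin

(*
  Let rho(t,x) = sum_j lam_j |D_N f_j(t,x)|^2 and A(n,m) = sum_j lam_j F f_j(n) cnj (F f_j(m)).
  Grouping the pairs (n,m) by k = n - m gives

    4 pi^2 rho(t,x) = Re sum_{|k| <= 2N} e^{ixk} C_k(t),

  where C_k is an exponential sum in t with coefficients A(n, n - k) and phases
  w(n) - w(n - k), w(n) = sqrt (n^2 + n^4). So sup_x |rho| is controlled by sum_k |C_k(t)|,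
  and a weighted Cauchy-Schwarz inequality reduces the claim to bounds on the integrals of
  |C_k|^2. As the second differences of w are at least 1, the phases of C_k are
  |k|-separated, and Schur's test bounds the integral of |C_k|^2 by
  W_k sum_n |A(n, n - k)|^2 with W_k ~ 1 + N^(1/2)/|k|; thus sum_k W_k = O(N). Finally
  Bessel's inequality for the orthonormal system bounds the Hilbert-Schmidt norm
  sum_{n,m} |A(n,m)|^2 by sum_j lam_j^2 <= ||lam||_beta^2.
*)

section \<open>The dispersion relation\<close>

definition dispersion :: "int \<Rightarrow> real" where
  "dispersion n = sqrt (of_int n ^ 2 + of_int n ^ 4)"

lemma dispersion_bounds:
  assumes "\<bar>n\<bar> \<ge> 1"
  shows "of_int n ^ 2 + 1/4 \<le> dispersion n" and "dispersion n \<le> of_int n ^ 2 + 1/2"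
proof -
  have "(1::real) \<le> \<bar>of_int n\<bar>" using assms by linarith
  then have n2: "(of_int n::real) ^ 2 \<ge> 1" by (metis one_le_power power2_abs)
  have "(of_int n ^ 2 + 1/4) ^ 2 \<le> (of_int n ^ 2 + of_int n ^ 4 :: real)"
    using n2 by (simp add: power2_eq_square power4_eq_xxxx algebra_simps)
  then show "of_int n ^ 2 + 1/4 \<le> dispersion n"
    unfolding dispersion_def by (rule real_le_rsqrt)
  have "(of_int n ^ 2 + of_int n ^ 4 :: real) \<le> (of_int n ^ 2 + 1/2) ^ 2"
    by (simp add: power2_eq_square power4_eq_xxxx algebra_simps)
  then show "dispersion n \<le> of_int n ^ 2 + 1/2"
    unfolding dispersion_def by (intro real_le_lsqrt) simp_all
qed

lemma sqrt_20_minus_2_sqrt_2_ge_1: "sqrt 20 - 2 * sqrt 2 \<ge> (1::real)"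
proof -
  have "sqrt 2 \<le> (11/4::real)" by (rule real_le_lsqrt) (simp_all add: power2_eq_square)
  then have "(1 + 2 * sqrt 2) ^ 2 \<le> (20::real)" by (simp add: power2_eq_square algebra_simps)
  then show ?thesis using real_le_rsqrt by fastforce
qed

lemma dispersion_second_difference_ge:
  "dispersion (n + 1) - 2 * dispersion n + dispersion (n - 1) \<ge> 1"
proof -
  have d0: "dispersion 0 = 0" and d1: "dispersion 1 = sqrt 2" "dispersion (-1) = sqrt 2"
    and d2: "dispersion 2 = sqrt 20" "dispersion (-2) = sqrt 20"
    by (simp_all add: dispersion_def)
  consider "n = 0" | "n = 1" | "n = -1" | "\<bar>n\<bar> \<ge> 2" by linarith
  then show ?thesis
  proof cases
    case 1
    have "1 \<le> sqrt (2::real)" by simp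
    moreover have "dispersion (n + 1) - 2 * dispersion n + dispersion (n - 1) = 2 * sqrt 2"
      using 1 d0 d1 by simp
    ultimately show ?thesis by linarith
  next
    case 2
    then show ?thesis using d0 d1 d2 sqrt_20_minus_2_sqrt_2_ge_1 by simp
  next
    case 3
    then show ?thesis using d0 d1 d2 sqrt_20_minus_2_sqrt_2_ge_1 by simp
  next
    case 4
    then have "\<bar>n + 1\<bar> \<ge> 1" "\<bar>n - 1\<bar> \<ge> 1" "\<bar>n\<bar> \<ge> 1" by auto
    from dispersion_bounds[OF this(1)] dispersion_bounds[OF this(2)] dispersion_bounds[OF this(3)]
    show ?thesis by (simp add: power2_eq_square algebra_simps)
  qed
qed

lemma int_increments_lower_bound:
  fixes g :: "int \<Rightarrow> real"
  assumes "\<And>i. g (i + 1) - g i \<ge> c" and "n \<le> m"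
  shows "g m - g n \<ge> c * of_int (m - n)"
  using assms(2)
proof (induction m rule: int_ge_induct)
  case base
  then show ?case by simp
next
  case (step i)
  then show ?case using assms(1)[of i] by (simp add: algebra_simps)
qed

lemma dispersion_increment_mono:
  assumes "n \<le> m"
  shows "(dispersion (m + 1) - dispersion m) - (dispersion (n + 1) - dispersion n) \<ge> of_int (m - n)"
proof -
  have "(dispersion (i + 1 + 1) - dispersion (i + 1)) - (dispersion (i + 1) - dispersion i) \<ge> 1" for i
    using dispersion_second_difference_ge[of "i + 1"] by simp
  from int_increments_lower_bound[where g = "\<lambda>i. dispersion (i + 1) - dispersion i", OF this assms]
  show ?thesis by simp
qed

definition phase_gap :: "int \<Rightarrow> int \<Rightarrow> real" where
  "phase_gap k n = dispersion n - dispersion (n - k)"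

lemma phase_gap_separated:
  "\<bar>phase_gap k n - phase_gap k n'\<bar> \<ge> of_int (\<bar>k\<bar> * \<bar>n - n'\<bar>)"
proof -
  define g where "g i = of_int (sgn k) * phase_gap k i" for i
  have "g (i + 1) - g i \<ge> of_int \<bar>k\<bar>" for i
  proof (cases "k \<ge> 0")
    case True
    then show ?thesis using dispersion_increment_mono[of "i - k" i]
      by (cases "k = 0") (simp_all add: g_def phase_gap_def algebra_simps)
  next
    case False
    then show ?thesis using dispersion_increment_mono[of i "i - k"]
      by (simp add: g_def phase_gap_def algebra_simps)
  qed
  then have gap: "g m - g n \<ge> of_int \<bar>k\<bar> * of_int (m - n)" if "n \<le> m" for m n
    using int_increments_lower_bound that by blast
  have g_le: "g m - g n \<le> \<bar>phase_gap k m - phase_gap k n\<bar>" for m n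
    by (simp add: g_def sgn_if algebra_simps) linarith
  show ?thesis
  proof (cases "n' \<le> n")
    case True
    then show ?thesis using gap[OF True] g_le[of n n'] by (simp add: abs_mult abs_minus_commute)
  next
    case False
    then show ?thesis using gap[of n n'] g_le[of n' n] by (simp add: abs_mult abs_minus_commute)
  qed
qed

section \<open>Oscillatory integrals over one period\<close>

definition osc_integral :: "real \<Rightarrow> complex" where
  "osc_integral g = integral {0..2 * pi} (\<lambda>t. exp (\<i> * of_real (t * g)))"

lemma osc_integral_has_integral:
  "((\<lambda>t. exp (\<i> * of_real (t * g))) has_integral osc_integral g) {0..2 * pi}"
  unfolding osc_integral_def
  by (intro integrable_integral integrable_continuous_interval continuous_intros)

lemma norm_osc_integral_le: "norm (osc_integral g) \<le> 2 * pi"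
proof -
  have "norm (osc_integral g) \<le> 1 * measure lborel (cbox 0 (2 * pi))"
    by (rule has_integral_bound[where f = "\<lambda>t. exp (\<i> * of_real (t * g))"])
      (use osc_integral_has_integral in auto)
  then show ?thesis by simp
qed

lemma osc_integral_eq:
  assumes "g \<noteq> 0"
  shows "osc_integral g = (exp (\<i> * of_real (2 * pi * g)) - 1) / (\<i> * of_real g)"
proof -
  let ?A = "\<i> * of_real g"
  have "((\<lambda>t. exp (t *\<^sub>R ?A) / ?A) has_vector_derivative exp (t *\<^sub>R ?A)) (at t within {0..2 * pi})" for t
  proof -
    have "((\<lambda>t. exp (t *\<^sub>R ?A)) has_vector_derivative exp (t *\<^sub>R ?A) * ?A) (at t within {0..2 * pi})"
      by (rule exp_scaleR_has_vector_derivative_right)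
    from has_vector_derivative_mult_left[OF this, of "inverse ?A"] show ?thesis
      using assms by (simp add: field_simps)
  qed
  then have "((\<lambda>t. exp (t *\<^sub>R ?A)) has_integral (exp ((2 * pi) *\<^sub>R ?A) / ?A - exp (0 *\<^sub>R ?A) / ?A)) {0..2 * pi}"
    by (intro fundamental_theorem_of_calculus) auto
  moreover have "(\<lambda>t. exp (t *\<^sub>R ?A)) = (\<lambda>t. exp (\<i> * of_real (t * g)))"
    by (auto simp: scaleR_conv_of_real algebra_simps)
  ultimately show ?thesis
    using has_integral_unique[OF osc_integral_has_integral]
    by (fastforce simp: scaleR_conv_of_real diff_divide_distrib algebra_simps)
qed

lemma norm_osc_integral_le_inverse:
  assumes "g \<noteq> 0"
  shows "norm (osc_integral g) \<le> 2 / \<bar>g\<bar>"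
proof -
  have "norm (exp (\<i> * of_real (2 * pi * g)) - 1) \<le> 2"
    using norm_triangle_ineq4[of "exp (\<i> * of_real (2 * pi * g))" 1] by simp
  then show ?thesis
    using assms by (simp add: osc_integral_eq norm_divide norm_mult divide_right_mono)
qed

lemma osc_integral_of_int:
  "osc_integral (of_int m) = (if m = 0 then 2 * pi else 0)"
proof (cases "m = 0")
  case True
  then show ?thesis by (simp add: osc_integral_def scaleR_conv_of_real)
next
  case False
  have "exp (\<i> * of_real (2 * pi * of_int m)) = 1"
    using exp_integer_2pi[of "of_int m"] by (simp add: mult_ac)
  then show ?thesis using False by (simp add: osc_integral_eq)
qed

lemma osc_integral_uminus: "osc_integral (- g) = cnj (osc_integral g)"
proof -
  have "cnj (osc_integral g) = integral {0..2 * pi} (\<lambda>t. cnj (exp (\<i> * of_real (t * g))))"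
    unfolding osc_integral_def by (rule integral_cnj)
  then show ?thesis unfolding osc_integral_def by (simp add: exp_cnj)
qed

section \<open>Square-integrable functions on the torus and Bessel's inequality\<close>

definition L2_torus :: "(real \<Rightarrow> complex) \<Rightarrow> bool" where
  "L2_torus g \<longleftrightarrow> g \<in> borel_measurable lborel \<and> set_integrable lborel torus (\<lambda>x. (norm (g x))\<^sup>2)"

definition inner_torus :: "(real \<Rightarrow> complex) \<Rightarrow> (real \<Rightarrow> complex) \<Rightarrow> complex" where
  "inner_torus g h = (LINT x:torus|lborel. g x * cnj (h x))"

lemma orthonormal_system_L2_torus: "orthonormal_system f \<Longrightarrow> L2_torus (f j)"
  unfolding orthonormal_system_def L2_torus_def by auto

lemma orthonormal_system_inner_torus:
  "orthonormal_system f \<Longrightarrow> inner_torus (f j) (f k) = (if j = k then 1 else 0)"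
  unfolding orthonormal_system_def inner_torus_def by auto

lemma torus_sets [measurable]: "torus \<in> sets lborel"
  unfolding torus_def by simp

lemma borel_measurable_cnj [measurable]:
  "h \<in> borel_measurable M \<Longrightarrow> (\<lambda>x. cnj (h x)) \<in> borel_measurable M"
  by (rule measurable_compose[where g = cnj]) (auto intro!: borel_measurable_continuous_onI continuous_intros)

lemma norm_mult_le_sum_squares: "norm (a * b :: complex) \<le> (norm a)\<^sup>2 + (norm b)\<^sup>2"
  unfolding norm_mult
  using sum_squares_bound[of "norm a" "norm b"] mult_nonneg_nonneg[OF norm_ge_zero norm_ge_zero, of a b]
  by linarith

lemma L2_torus_integrable_product:
  assumes "L2_torus g" "L2_torus h"
  shows "set_integrable lborel torus (\<lambda>x. g x * cnj (h x))"
proof (rule set_integrable_bound[where f = "\<lambda>x. (norm (g x))\<^sup>2 + (norm (h x))\<^sup>2"])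
  show "set_integrable lborel torus (\<lambda>x. (norm (g x))\<^sup>2 + (norm (h x))\<^sup>2)"
    using assms unfolding L2_torus_def by (intro set_integral_add) auto
  have [measurable]: "g \<in> borel_measurable lborel" "h \<in> borel_measurable lborel"
    using assms unfolding L2_torus_def by auto
  show "set_borel_measurable lborel torus (\<lambda>x. g x * cnj (h x))"
    unfolding set_borel_measurable_def by measurable
  show "AE x in lborel. x \<in> torus \<longrightarrow> norm (g x * cnj (h x)) \<le> norm ((norm (g x))\<^sup>2 + (norm (h x))\<^sup>2)"
    using norm_mult_le_sum_squares[of "g _" "cnj (h _)"] by (intro AE_I2 impI) simp
qed

lemma L2_torus_continuous:
  assumes "continuous_on UNIV g"
  shows "L2_torus g"
  unfolding L2_torus_def
proof
  show "g \<in> borel_measurable lborel"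
    using borel_measurable_continuous_onI[OF assms] by simp
  have "integrable lborel (\<lambda>x. indicator {0..2 * pi} x *\<^sub>R (norm (g x))\<^sup>2)"
    by (rule borel_integrable_compact) (auto intro!: continuous_intros continuous_on_subset[OF assms])
  then show "set_integrable lborel torus (\<lambda>x. (norm (g x))\<^sup>2)"
    unfolding set_integrable_def[symmetric]
    by (rule set_integrable_subset) (auto simp: torus_def)
qed

lemma L2_torus_add:
  assumes "L2_torus g" "L2_torus h"
  shows "L2_torus (\<lambda>x. g x + h x)"
  unfolding L2_torus_def
proof
  have [measurable]: "g \<in> borel_measurable lborel" "h \<in> borel_measurable lborel"
    using assms unfolding L2_torus_def by auto
  show "(\<lambda>x. g x + h x) \<in> borel_measurable lborel" by measurable
  show "set_integrable lborel torus (\<lambda>x. (norm (g x + h x))\<^sup>2)"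
  proof (rule set_integrable_bound[where f = "\<lambda>x. 2 * (norm (g x))\<^sup>2 + 2 * (norm (h x))\<^sup>2"])
    show "set_integrable lborel torus (\<lambda>x. 2 * (norm (g x))\<^sup>2 + 2 * (norm (h x))\<^sup>2)"
      using assms unfolding L2_torus_def by (intro set_integral_add) auto
    show "set_borel_measurable lborel torus (\<lambda>x. (norm (g x + h x))\<^sup>2)"
      unfolding set_borel_measurable_def by measurable
    have "(norm (g x + h x))\<^sup>2 \<le> 2 * (norm (g x))\<^sup>2 + 2 * (norm (h x))\<^sup>2" for x
    proof -
      have "(norm (g x + h x))\<^sup>2 \<le> (norm (g x) + norm (h x))\<^sup>2"
        using norm_triangle_ineq by (simp add: power_mono)
      then show ?thesis
        using sum_squares_bound[of "norm (g x)" "norm (h x)"] by (simp add: power2_sum)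
    qed
    then show "AE x in lborel. x \<in> torus \<longrightarrow>
        norm ((norm (g x + h x))\<^sup>2) \<le> norm (2 * (norm (g x))\<^sup>2 + 2 * (norm (h x))\<^sup>2)"
      by auto
  qed
qed

lemma L2_torus_scale:
  assumes "L2_torus g"
  shows "L2_torus (\<lambda>x. c * g x)"
  unfolding L2_torus_def
proof
  have [measurable]: "g \<in> borel_measurable lborel"
    using assms unfolding L2_torus_def by auto
  show "(\<lambda>x. c * g x) \<in> borel_measurable lborel" by measurable
  have "set_integrable lborel torus (\<lambda>x. (norm c)\<^sup>2 * (norm (g x))\<^sup>2)"
    using assms unfolding L2_torus_def by (intro set_integrable_mult_right) auto
  then show "set_integrable lborel torus (\<lambda>x. (norm (c * g x))\<^sup>2)"
    by (simp add: norm_mult power_mult_distrib)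
qed

lemma L2_torus_sum:
  assumes "finite I" "\<And>i. i \<in> I \<Longrightarrow> L2_torus (g i)"
  shows "L2_torus (\<lambda>x. \<Sum>i\<in>I. g i x)"
  using assms
proof (induction I rule: finite_induct)
  case empty
  then show ?case by (simp add: L2_torus_continuous)
next
  case (insert i I)
  then show ?case by (simp add: L2_torus_add)
qed

lemma L2_torus_diff:
  assumes "L2_torus g" "L2_torus h"
  shows "L2_torus (\<lambda>x. g x - h x)"
  using L2_torus_add[OF assms(1) L2_torus_scale[OF assms(2), of "-1"]] by simp

lemma inner_torus_sum_left:
  assumes "finite I" "\<And>i. i \<in> I \<Longrightarrow> L2_torus (g i)" "L2_torus h"
  shows "inner_torus (\<lambda>x. \<Sum>i\<in>I. a i * g i x) h = (\<Sum>i\<in>I. a i * inner_torus (g i) h)"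
proof -
  have eq: "(\<lambda>x. (\<Sum>i\<in>I. a i * g i x) * cnj (h x)) = (\<lambda>x. \<Sum>i\<in>I. a i * (g i x * cnj (h x)))"
    by (simp add: sum_distrib_right mult.assoc)
  have "set_integrable lborel torus (\<lambda>x. a i * (g i x * cnj (h x)))" if "i \<in> I" for i
    using L2_torus_integrable_product[OF assms(2)[OF that] assms(3)] by auto
  then have "(LINT x:torus|lborel. (\<Sum>i\<in>I. a i * (g i x * cnj (h x))))
      = (\<Sum>i\<in>I. (LINT x:torus|lborel. a i * (g i x * cnj (h x))))"
    unfolding set_lebesgue_integral_def set_integrable_def
    by (simp add: scaleR_sum_right integral_sum)
  then show ?thesis unfolding inner_torus_def eq by simp
qed

lemma inner_torus_cnj: "inner_torus h g = cnj (inner_torus g h)"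
proof -
  have "inner_torus h g = integral\<^sup>L lborel (\<lambda>x. cnj (indicator torus x *\<^sub>R (g x * cnj (h x))))"
    unfolding inner_torus_def set_lebesgue_integral_def
    by (intro Bochner_Integration.integral_cong) (auto simp: mult.commute)
  also have "\<dots> = cnj (inner_torus g h)"
    unfolding inner_torus_def set_lebesgue_integral_def by (rule Bochner_Integration.integral_cnj)
  finally show ?thesis .
qed

lemma inner_torus_sum_right:
  assumes "finite I" "\<And>i. i \<in> I \<Longrightarrow> L2_torus (h i)" "L2_torus g"
  shows "inner_torus g (\<lambda>x. \<Sum>i\<in>I. a i * h i x) = (\<Sum>i\<in>I. cnj (a i) * inner_torus g (h i))"
  using inner_torus_sum_left[OF assms] by (simp add: inner_torus_cnj[of g] cnj_sum)

lemma inner_torus_diff_left: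
  assumes "L2_torus g" "L2_torus g'" "L2_torus h"
  shows "inner_torus (\<lambda>x. g x - g' x) h = inner_torus g h - inner_torus g' h"
  using inner_torus_sum_left[of "{True, False}" "\<lambda>b. if b then g else g'" h "\<lambda>b. if b then 1 else -1"] assms
  by simp

lemma inner_torus_diff_right:
  assumes "L2_torus g" "L2_torus h" "L2_torus h'"
  shows "inner_torus g (\<lambda>x. h x - h' x) = inner_torus g h - inner_torus g h'"
  using inner_torus_diff_left[OF assms(2,3,1)] by (simp add: inner_torus_cnj[of g])

lemma inner_torus_self: "inner_torus g g = of_real (LINT x:torus|lborel. (norm (g x))\<^sup>2)"
proof -
  have "(\<lambda>x. g x * cnj (g x)) = (\<lambda>x. complex_of_real ((norm (g x))\<^sup>2))"
    by (metis complex_norm_square of_real_power)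
  then show ?thesis unfolding inner_torus_def by (simp only: set_integral_complex_of_real)
qed

lemma Re_inner_torus_self_nonneg: "Re (inner_torus g g) \<ge> 0"
  unfolding inner_torus_self set_lebesgue_integral_def by (simp add: Bochner_Integration.integral_nonneg)

lemma Re_mult_cnj: "Re (z * cnj z) = (norm z)\<^sup>2"
  by (metis Re_complex_of_real complex_norm_square)

lemma bessel_inequality:
  assumes ons: "orthonormal_system f" and g: "L2_torus g"
  shows "(\<Sum>j<J. (norm (inner_torus g (f j)))\<^sup>2) \<le> Re (inner_torus g g)"
proof -
  note fL2 = orthonormal_system_L2_torus[OF ons]
  define p where "p j = inner_torus g (f j)" for j
  define h where "h x = (\<Sum>j<J. p j * f j x)" for x
  have hL2: "L2_torus h" unfolding h_def by (intro L2_torus_sum L2_torus_scale fL2) auto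
  have gh: "inner_torus g h = (\<Sum>j<J. cnj (p j) * p j)"
    unfolding h_def by (subst inner_torus_sum_right) (auto simp: fL2 g p_def)
  have hg: "inner_torus h g = (\<Sum>j<J. p j * cnj (p j))"
    by (subst inner_torus_cnj) (simp add: gh mult.commute)
  have "inner_torus h h = (\<Sum>j<J. p j * inner_torus (f j) h)"
    unfolding h_def[abs_def] by (rule inner_torus_sum_left) (auto simp: fL2 hL2[unfolded h_def[abs_def]])
  also have "\<dots> = (\<Sum>j<J. p j * (\<Sum>k<J. cnj (p k) * inner_torus (f j) (f k)))"
    unfolding h_def[abs_def] by (intro sum.cong refl arg_cong2[where f = "(*)"] inner_torus_sum_right) (auto simp: fL2)
  also have "\<dots> = (\<Sum>j<J. p j * cnj (p j))"
    by (simp add: orthonormal_system_inner_torus[OF ons] if_distrib cong: if_cong)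
  finally have hh: "inner_torus h h = (\<Sum>j<J. p j * cnj (p j))" .
  have "inner_torus (\<lambda>x. g x - h x) (\<lambda>x. g x - h x) = inner_torus g g - (\<Sum>j<J. p j * cnj (p j))"
    by (simp add: inner_torus_diff_left inner_torus_diff_right g hL2 L2_torus_diff gh hg hh mult.commute)
  then have "Re (inner_torus g g) - (\<Sum>j<J. Re (p j * cnj (p j))) \<ge> 0"
    using Re_inner_torus_self_nonneg[of "\<lambda>x. g x - h x"] by (simp add: Re_sum)
  then show ?thesis unfolding Re_mult_cnj p_def by simp
qed

definition fourier_mode :: "int \<Rightarrow> real \<Rightarrow> complex" where
  "fourier_mode n x = exp (\<i> * of_real x * of_int n)"

lemma L2_torus_fourier_mode: "L2_torus (fourier_mode n)"
  by (rule L2_torus_continuous) (auto simp: fourier_mode_def intro!: continuous_intros)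

lemma fourier_coeff_eq_inner_torus: "fourier_coeff f n = inner_torus f (fourier_mode n) / (2 * pi)"
proof -
  have "(\<lambda>x. exp (- \<i> * of_real x * of_int n) * f x) = (\<lambda>x. f x * cnj (fourier_mode n x))"
    by (simp add: fourier_mode_def exp_cnj mult.commute)
  then show ?thesis unfolding fourier_coeff_def inner_torus_def by simp
qed

lemma inner_torus_fourier_mode:
  "inner_torus (fourier_mode n) (fourier_mode m) = (if n = m then 2 * pi else 0)"
proof -
  let ?e = "\<lambda>x. exp (\<i> * of_real (x * of_int (n - m)))"
  have eq: "(\<lambda>x. fourier_mode n x * cnj (fourier_mode m x)) = ?e"
    by (simp add: fourier_mode_def exp_cnj exp_add[symmetric] algebra_simps)
  have "set_integrable lborel torus ?e"
    using L2_torus_integrable_product[OF L2_torus_fourier_mode L2_torus_fourier_mode, of n m]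
    unfolding eq .
  then have "inner_torus (fourier_mode n) (fourier_mode m) = integral torus ?e"
    unfolding inner_torus_def eq by (rule set_borel_integral_eq_integral(2))
  also have "\<dots> = integral {0..2 * pi} ?e"
  proof (rule integral_spike_set)
    show "negligible {x \<in> torus - {0..2 * pi}. ?e x \<noteq> 0}"
      by (rule negligible_subset[of "{}"]) (auto simp: torus_def)
    show "negligible {x \<in> {0..2 * pi} - torus. ?e x \<noteq> 0}"
      by (rule negligible_subset[OF negligible_sing[of "2 * pi"]]) (auto simp: torus_def)
  qed
  also have "\<dots> = osc_integral (of_int (n - m))" unfolding osc_integral_def by simp
  also have "\<dots> = (if n = m then 2 * pi else 0)" unfolding osc_integral_of_int by simp
  finally show ?thesis .
qed

text \<open>Bessel's inequality tested against the trigonometric polynomial with coefficients v.\<close>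
lemma bessel_fourier_coeff_pairing:
  assumes ons: "orthonormal_system f" and fin: "finite S"
  shows "(\<Sum>j<J. (norm (\<Sum>n\<in>S. fourier_coeff (f j) n * cnj (v n)))\<^sup>2)
          \<le> (\<Sum>n\<in>S. (norm (v n))\<^sup>2) / (2 * pi)"
proof -
  note fL2 = orthonormal_system_L2_torus[OF ons]
  define p where "p x = (\<Sum>n\<in>S. v n * fourier_mode n x)" for x
  note p_eq = p_def[abs_def]
  have pL2: "L2_torus p" unfolding p_def using fin by (intro L2_torus_sum L2_torus_scale L2_torus_fourier_mode)
  have pairing: "(\<Sum>n\<in>S. fourier_coeff (f j) n * cnj (v n)) = cnj (inner_torus p (f j)) / (2 * pi)" for j
  proof -
    have "inner_torus (f j) p = (\<Sum>n\<in>S. cnj (v n) * inner_torus (f j) (fourier_mode n))"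
      unfolding p_eq by (rule inner_torus_sum_right) (auto simp: fin L2_torus_fourier_mode fL2)
    then show ?thesis
      by (simp add: fourier_coeff_eq_inner_torus sum_divide_distrib mult.commute inner_torus_cnj[of p])
  qed
  have "inner_torus p p = (\<Sum>n\<in>S. v n * inner_torus (fourier_mode n) p)"
    by (subst (1) p_eq, rule inner_torus_sum_left) (auto simp: fin L2_torus_fourier_mode pL2)
  also have "\<dots> = (\<Sum>n\<in>S. v n * (\<Sum>m\<in>S. cnj (v m) * inner_torus (fourier_mode n) (fourier_mode m)))"
    by (intro sum.cong refl arg_cong2[where f = "(*)"], subst p_eq, rule inner_torus_sum_right)
      (auto simp: fin L2_torus_fourier_mode)
  also have "\<dots> = (\<Sum>n\<in>S. v n * cnj (v n) * (2 * pi))"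
    using fin by (simp add: inner_torus_fourier_mode if_distrib mult.assoc cong: if_cong)
  also have "\<dots> = (\<Sum>n\<in>S. of_real (2 * pi * (norm (v n))\<^sup>2))"
    by (intro sum.cong refl) (simp add: complex_norm_square[symmetric])
  finally have pp: "Re (inner_torus p p) = 2 * pi * (\<Sum>n\<in>S. (norm (v n))\<^sup>2)"
    by (simp add: Re_sum sum_distrib_left)
  have "(\<Sum>j<J. (norm (\<Sum>n\<in>S. fourier_coeff (f j) n * cnj (v n)))\<^sup>2)
      = (\<Sum>j<J. (norm (inner_torus p (f j)))\<^sup>2) / (2 * pi) ^ 2"
    by (simp add: pairing norm_divide power_divide sum_divide_distrib)
  also have "\<dots> \<le> Re (inner_torus p p) / (2 * pi) ^ 2"
    by (intro divide_right_mono bessel_inequality ons pL2) simp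
  also have "\<dots> = (\<Sum>n\<in>S. (norm (v n))\<^sup>2) / (2 * pi)"
    unfolding pp by (simp add: power2_eq_square)
  finally show ?thesis .
qed

section \<open>Exponential sums and Gram matrices\<close>

lemma inverse_le_sqrt_increment: "1 / real (Suc M) \<le> 2 * (sqrt (real (Suc M)) - sqrt (real M))"
proof -
  define a where "a = sqrt (real M)"
  define b where "b = sqrt (real (Suc M))"
  have ab: "0 \<le> a" "a \<le> b" "1 \<le> b" unfolding a_def b_def by simp_all
  have bb: "b ^ 2 = real (Suc M)" and prod: "(b - a) * (b + a) = 1"
    unfolding a_def b_def by (simp_all add: power2_eq_square algebra_simps)
  have "b \<le> b * b" using mult_left_mono[of 1 b b] ab by simp
  then have "b + a \<le> 2 * b ^ 2" using ab unfolding power2_eq_square by linarith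
  then have "1 \<le> (2 * (b - a)) * b ^ 2" using prod ab
    by (metis diff_ge_0_iff_ge mult_left_mono mult.assoc mult.commute)
  then show ?thesis using ab bb by (simp add: a_def b_def divide_le_eq)
qed

lemma harmonic_sum_le_sqrt: "(\<Sum>d = 1..M. 1 / real d) \<le> 2 * sqrt (real M)"
proof (induction M)
  case 0
  then show ?case by simp
next
  case (Suc M)
  then show ?case using inverse_le_sqrt_increment[of M] by simp
qed

lemma sum_inverse_distinct_le:
  assumes "finite A" "\<And>a. a \<in> A \<Longrightarrow> 1 \<le> h a \<and> h a \<le> int M" "inj_on h A"
  shows "(\<Sum>a\<in>A. 1 / real_of_int (h a)) \<le> 2 * sqrt (real M)"
proof -
  have inj: "inj_on (\<lambda>a. nat (h a)) A"
    using assms(2,3) by (auto simp: inj_on_def) (metis nat_eq_iff2 order_trans zero_le_one)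
  have "(\<Sum>a\<in>A. 1 / real_of_int (h a)) = (\<Sum>a\<in>A. 1 / real (nat (h a)))"
    using assms(2) by (intro sum.cong refl) (metis of_nat_nat order_trans zero_le_one)
  also have "\<dots> = (\<Sum>d\<in>(\<lambda>a. nat (h a)) ` A. 1 / real d)"
    by (simp add: sum.reindex[OF inj])
  also have "\<dots> \<le> (\<Sum>d = 1..M. 1 / real d)"
    by (rule sum_mono2) (use assms(2) in force)+
  also have "\<dots> \<le> 2 * sqrt (real M)" by (rule harmonic_sum_le_sqrt)
  finally show ?thesis .
qed

lemma sum_inverse_distance_le:
  assumes "finite T" "T \<subseteq> {n - int M .. n + int M}"
  shows "(\<Sum>n'\<in>T - {n}. 1 / real_of_int \<bar>n - n'\<bar>) \<le> 4 * sqrt (real M)"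
proof -
  let ?A = "{n'\<in>T. n' < n}" and ?B = "{n'\<in>T. n < n'}"
  have split: "T - {n} = ?A \<union> ?B" by auto
  have "(\<Sum>n'\<in>T - {n}. 1 / real_of_int \<bar>n - n'\<bar>)
      = (\<Sum>n'\<in>?A. 1 / real_of_int \<bar>n - n'\<bar>) + (\<Sum>n'\<in>?B. 1 / real_of_int \<bar>n - n'\<bar>)"
    unfolding split by (rule sum.union_disjoint) (use assms(1) in auto)
  also have "\<dots> = (\<Sum>n'\<in>?A. 1 / real_of_int (n - n')) + (\<Sum>n'\<in>?B. 1 / real_of_int (n' - n))"
    by (intro arg_cong2[where f = "(+)"] sum.cong) auto
  also have "\<dots> \<le> 2 * sqrt (real M) + 2 * sqrt (real M)"
    by (intro add_mono sum_inverse_distinct_le) (use assms in \<open>auto simp: inj_on_def\<close>)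
  finally show ?thesis by simp
qed

lemma schur_test:
  fixes x :: "'a \<Rightarrow> real"
  assumes "finite S" and K_nonneg: "\<And>n n'. 0 \<le> K n n'" and K_sym: "\<And>n n'. K n n' = K n' n"
    and row_sum: "\<And>n. n \<in> S \<Longrightarrow> (\<Sum>n'\<in>S. K n n') \<le> W"
  shows "(\<Sum>n\<in>S. \<Sum>n'\<in>S. x n * x n' * K n n') \<le> W * (\<Sum>n\<in>S. (x n)\<^sup>2)"
proof -
  have "(\<Sum>n\<in>S. \<Sum>n'\<in>S. x n * x n' * K n n')
      \<le> (\<Sum>n\<in>S. \<Sum>n'\<in>S. ((x n)\<^sup>2 * K n n' + (x n')\<^sup>2 * K n n') / 2)"
  proof (intro sum_mono)
    fix n n'
    from mult_right_mono[OF sum_squares_bound[of "x n" "x n'"] K_nonneg[of n n']]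
    show "x n * x n' * K n n' \<le> ((x n)\<^sup>2 * K n n' + (x n')\<^sup>2 * K n n') / 2"
      by (simp add: algebra_simps)
  qed
  also have "\<dots> = (\<Sum>n\<in>S. \<Sum>n'\<in>S. (x n)\<^sup>2 * K n n')"
  proof -
    have "(\<Sum>n\<in>S. \<Sum>n'\<in>S. (x n')\<^sup>2 * K n n') = (\<Sum>n\<in>S. \<Sum>n'\<in>S. (x n)\<^sup>2 * K n n')"
      by (subst sum.swap) (simp add: K_sym)
    then show ?thesis by (simp only: add_divide_distrib sum.distrib sum_divide_distrib[symmetric])
  qed
  also have "\<dots> \<le> (\<Sum>n\<in>S. (x n)\<^sup>2 * W)"
    by (intro sum_mono) (simp add: sum_distrib_left[symmetric] mult_left_mono row_sum)
  finally show ?thesis by (simp add: sum_distrib_left mult.commute)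
qed

lemma integral_norm_exp_sum_sq_le:
  fixes a :: "'a \<Rightarrow> real" and b :: "'a \<Rightarrow> complex"
  assumes fin: "finite S" and W: "\<And>n. n \<in> S \<Longrightarrow> (\<Sum>n'\<in>S. norm (osc_integral (a n - a n'))) \<le> W"
  shows "integral {0..2 * pi} (\<lambda>t. (norm (\<Sum>n\<in>S. b n * exp (\<i> * of_real (t * a n))))\<^sup>2)
          \<le> W * (\<Sum>n\<in>S. (norm (b n))\<^sup>2)"
proof -
  let ?F = "\<lambda>t. \<Sum>n\<in>S. \<Sum>n'\<in>S. b n * cnj (b n') * exp (\<i> * of_real (t * (a n - a n')))"
  let ?I = "\<Sum>n\<in>S. \<Sum>n'\<in>S. b n * cnj (b n') * osc_integral (a n - a n')"
  let ?K = "\<lambda>n n'. norm (osc_integral (a n - a n'))"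
  have "(?F has_integral ?I) {0..2 * pi}"
    by (intro has_integral_sum fin has_integral_mult_right osc_integral_has_integral)
  from has_integral_linear[OF this bounded_linear_Re]
  have "((\<lambda>t. Re (?F t)) has_integral Re ?I) {0..2 * pi}" by (simp add: o_def)
  moreover have "(norm (\<Sum>n\<in>S. b n * exp (\<i> * of_real (t * a n))))\<^sup>2 = Re (?F t)" for t
  proof -
    have "complex_of_real ((norm (\<Sum>n\<in>S. b n * exp (\<i> * of_real (t * a n))))\<^sup>2) = ?F t"
      unfolding complex_norm_square
      by (simp add: sum_product cnj_sum exp_cnj mult_ac flip: exp_add) (simp add: algebra_simps)
    then show ?thesis by (metis Re_complex_of_real)
  qed
  ultimately have "((\<lambda>t. (norm (\<Sum>n\<in>S. b n * exp (\<i> * of_real (t * a n))))\<^sup>2) has_integral Re ?I) {0..2 * pi}"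
    by (simp only:)
  then have "integral {0..2 * pi} (\<lambda>t. (norm (\<Sum>n\<in>S. b n * exp (\<i> * of_real (t * a n))))\<^sup>2) = Re ?I"
    by (rule integral_unique)
  also have "\<dots> \<le> norm ?I" by (rule complex_Re_le_cmod)
  also have "\<dots> \<le> (\<Sum>n\<in>S. \<Sum>n'\<in>S. norm (b n) * norm (b n') * ?K n n')"
    by (rule order_trans[OF norm_sum sum_mono], rule order_trans[OF norm_sum sum_mono])
      (simp add: norm_mult)
  also have "\<dots> \<le> W * (\<Sum>n\<in>S. (norm (b n))\<^sup>2)"
  proof (rule schur_test[OF fin])
    show "?K n n' = ?K n' n" for n n'
      using osc_integral_uminus[of "a n' - a n"] by simp
  qed (use W in auto)
  finally show ?thesis .
qed

lemma sum_pairs_by_differences: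
  fixes F :: "int \<Rightarrow> int \<Rightarrow> 'a::comm_monoid_add"
  assumes "finite S" "finite K" "\<And>n m. n \<in> S \<Longrightarrow> m \<in> S \<Longrightarrow> n - m \<in> K"
  shows "(\<Sum>n\<in>S. \<Sum>m\<in>S. F n m) = (\<Sum>k\<in>K. \<Sum>n\<in>S. if n - k \<in> S then F n (n - k) else 0)"
proof -
  have "(\<Sum>m\<in>S. F n m) = (\<Sum>k\<in>K. if n - k \<in> S then F n (n - k) else 0)" if "n \<in> S" for n
  proof -
    have "(\<Sum>k\<in>K. if n - k \<in> S then F n (n - k) else 0) = (\<Sum>k\<in>{k\<in>K. n - k \<in> S}. F n (n - k))"
      using assms(2) by (simp add: sum.inter_filter)
    also have "\<dots> = (\<Sum>m\<in>S. F n m)"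
      by (rule sum.reindex_bij_witness[where i = "\<lambda>m. n - m" and j = "\<lambda>k. n - k"]) (use assms(3) that in auto)
    finally show ?thesis by simp
  qed
  then show ?thesis by (simp add: sum.swap[of _ K])
qed

lemma sum_swap_outer_pairs:
  "(\<Sum>a\<in>A. \<Sum>b\<in>B. \<Sum>c\<in>C. \<Sum>d\<in>D. f a b c d) = (\<Sum>c\<in>C. \<Sum>d\<in>D. \<Sum>a\<in>A. \<Sum>b\<in>B. f a b c d)"
proof -
  have "(\<Sum>a\<in>A. \<Sum>b\<in>B. \<Sum>c\<in>C. \<Sum>d\<in>D. f a b c d) = (\<Sum>a\<in>A. \<Sum>c\<in>C. \<Sum>d\<in>D. \<Sum>b\<in>B. f a b c d)"
    by (intro sum.cong refl) (subst sum.swap, intro sum.cong refl sum.swap)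
  also have "\<dots> = (\<Sum>c\<in>C. \<Sum>d\<in>D. \<Sum>a\<in>A. \<Sum>b\<in>B. f a b c d)"
    by (subst sum.swap, intro sum.cong refl sum.swap)
  finally show ?thesis .
qed

lemma sum_norm_sq_weighted_outer_products:
  fixes c :: "'j \<Rightarrow> 'a \<Rightarrow> complex" and lam :: "'j \<Rightarrow> real"
  shows "(\<Sum>n\<in>S. \<Sum>m\<in>S. (norm (\<Sum>j\<in>J. of_real (lam j) * (c j n * cnj (c j m))))\<^sup>2)
       = (\<Sum>j\<in>J. \<Sum>j'\<in>J. lam j * lam j' * (norm (\<Sum>n\<in>S. c j n * cnj (c j' n)))\<^sup>2)"
proof -
  have "complex_of_real (\<Sum>n\<in>S. \<Sum>m\<in>S. (norm (\<Sum>j\<in>J. of_real (lam j) * (c j n * cnj (c j m))))\<^sup>2)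
      = (\<Sum>n\<in>S. \<Sum>m\<in>S. \<Sum>j\<in>J. \<Sum>j'\<in>J. of_real (lam j * lam j') * ((c j n * cnj (c j' n)) * (cnj (c j m) * c j' m)))"
    by (simp only: of_real_sum complex_norm_square) (simp add: cnj_sum sum_product mult_ac)
  also have "\<dots> = (\<Sum>j\<in>J. \<Sum>j'\<in>J. \<Sum>n\<in>S. \<Sum>m\<in>S. of_real (lam j * lam j') * ((c j n * cnj (c j' n)) * (cnj (c j m) * c j' m)))"
    by (rule sum_swap_outer_pairs)
  also have "\<dots> = complex_of_real (\<Sum>j\<in>J. \<Sum>j'\<in>J. lam j * lam j' * (norm (\<Sum>n\<in>S. c j n * cnj (c j' n)))\<^sup>2)"
    unfolding of_real_sum
  proof (intro sum.cong refl)
    fix j j'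
    have "cnj (\<Sum>n\<in>S. c j n * cnj (c j' n)) = (\<Sum>m\<in>S. cnj (c j m) * c j' m)" by (simp add: cnj_sum)
    then show "(\<Sum>n\<in>S. \<Sum>m\<in>S. of_real (lam j * lam j') * ((c j n * cnj (c j' n)) * (cnj (c j m) * c j' m)))
        = of_real (lam j * lam j' * (norm (\<Sum>n\<in>S. c j n * cnj (c j' n)))\<^sup>2)"
      by (simp only: of_real_mult complex_norm_square) (simp add: sum_product sum_distrib_left mult_ac)
  qed
  finally show ?thesis by (simp only: of_real_eq_iff)
qed

lemma hilbert_schmidt_bound:
  fixes c :: "nat \<Rightarrow> 'a \<Rightarrow> complex" and lam :: "nat \<Rightarrow> real"
  assumes "0 \<le> B"
    and frame: "\<And>J v. (\<Sum>j<J. (norm (\<Sum>n\<in>S. c j n * cnj (v n)))\<^sup>2) \<le> B * (\<Sum>n\<in>S. (norm (v n))\<^sup>2)"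
  shows "(\<Sum>n\<in>S. \<Sum>m\<in>S. (norm (\<Sum>j<J. of_real (lam j) * (c j n * cnj (c j m))))\<^sup>2)
          \<le> B\<^sup>2 * (\<Sum>j<J. (lam j)\<^sup>2)"
proof -
  define G where "G j j' = (\<Sum>n\<in>S. c j n * cnj (c j' n))" for j j'
  define csq where "csq j = (\<Sum>n\<in>S. (norm (c j n))\<^sup>2)" for j
  have G_swap: "norm (G j' j) = norm (G j j')" for j j'
    using complex_mod_cnj[of "G j j'"] by (simp add: G_def cnj_sum mult.commute)
  have column: "(\<Sum>j<J'. (norm (G j j'))\<^sup>2) \<le> B * csq j'" for J' j'
    using frame[where J = J' and v = "c j'"] unfolding G_def csq_def .
  have csq_le: "csq j \<le> B" for j
  proof -
    have "G j j = of_real (csq j)"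
      unfolding G_def csq_def by (simp only: of_real_sum complex_norm_square)
    then have "(csq j)\<^sup>2 \<le> (\<Sum>j'<Suc j. (norm (G j' j))\<^sup>2)"
      using member_le_sum[of j "{..<Suc j}" "\<lambda>j'. (norm (G j' j))\<^sup>2"] by simp
    also have "\<dots> \<le> B * csq j" by (rule column)
    finally have "csq j * csq j \<le> B * csq j" by (simp add: power2_eq_square)
    moreover have "0 \<le> csq j" unfolding csq_def by (simp add: sum_nonneg)
    ultimately show ?thesis using \<open>0 \<le> B\<close> by (cases "csq j = 0") (auto simp: mult_le_cancel_right)
  qed
  have "(\<Sum>n\<in>S. \<Sum>m\<in>S. (norm (\<Sum>j<J. of_real (lam j) * (c j n * cnj (c j m))))\<^sup>2)
      = (\<Sum>j<J. \<Sum>j'<J. lam j * lam j' * (norm (G j j'))\<^sup>2)"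
    unfolding G_def by (rule sum_norm_sq_weighted_outer_products)
  also have "\<dots> \<le> B\<^sup>2 * (\<Sum>j<J. (lam j)\<^sup>2)"
  proof (rule schur_test)
    show "(\<Sum>j'<J. (norm (G j j'))\<^sup>2) \<le> B\<^sup>2" for j
      using column[where J' = J and j' = j] mult_left_mono[OF csq_le \<open>0 \<le> B\<close>, of j]
      by (simp add: G_swap power2_eq_square)
  qed (auto simp: G_swap)
  finally show ?thesis .
qed

section \<open>Sequences in l^beta\<close>

lemma abs_le_lp_norm:
  assumes "0 < \<beta>" and "in_lp \<beta> lam"
  shows "\<bar>lam j\<bar> \<le> lp_norm \<beta> lam"
proof -
  have "\<bar>lam j\<bar> powr \<beta> \<le> (\<Sum>i. \<bar>lam i\<bar> powr \<beta>)"
    using sum_le_suminf[OF assms(2)[unfolded in_lp_def], of "{j}"] by simp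
  then have "(\<bar>lam j\<bar> powr \<beta>) powr (1 / \<beta>) \<le> (\<Sum>i. \<bar>lam i\<bar> powr \<beta>) powr (1 / \<beta>)"
    using assms(1) by (intro powr_mono2) auto
  then show ?thesis using assms(1) by (simp add: lp_norm_def powr_powr)
qed

(* Interpolation: |lam_j|^2 <= |lam_j|^beta * ||lam||_inf^(2 - beta) and ||lam||_inf <= ||lam||_beta. *)
lemma l2_le_lp_norm:
  assumes b: "0 < \<beta>" "\<beta> \<le> 2" and lp: "in_lp \<beta> lam"
  shows "summable (\<lambda>j. (lam j)\<^sup>2)" and "(\<Sum>j. (lam j)\<^sup>2) \<le> (lp_norm \<beta> lam)\<^sup>2"
proof -
  define s where "s = (\<Sum>j. \<bar>lam j\<bar> powr \<beta>)"
  define L where "L = lp_norm \<beta> lam"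
  have sm: "summable (\<lambda>j. \<bar>lam j\<bar> powr \<beta>)" using lp unfolding in_lp_def .
  have L_eq: "L = s powr (1 / \<beta>)" unfolding L_def lp_norm_def s_def ..
  have bnd: "(lam i)\<^sup>2 \<le> \<bar>lam i\<bar> powr \<beta> * L powr (2 - \<beta>)" for i
  proof (cases "lam i = 0")
    case False
    then have "(lam i)\<^sup>2 = \<bar>lam i\<bar> powr \<beta> * \<bar>lam i\<bar> powr (2 - \<beta>)"
      by (simp add: powr_add[symmetric] powr_numeral)
    also have "\<dots> \<le> \<bar>lam i\<bar> powr \<beta> * L powr (2 - \<beta>)"
      using abs_le_lp_norm[OF b(1) lp] b unfolding L_def by (intro mult_left_mono powr_mono2) auto
    finally show ?thesis .
  qed simp
  have sm2: "summable (\<lambda>i. \<bar>lam i\<bar> powr \<beta> * L powr (2 - \<beta>))"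
    by (rule summable_mult2[OF sm])
  show "summable (\<lambda>j. (lam j)\<^sup>2)"
    by (rule summable_comparison_test[OF _ sm2]) (use bnd in auto)
  then have "(\<Sum>j. (lam j)\<^sup>2) \<le> s * L powr (2 - \<beta>)"
    unfolding s_def suminf_mult2[OF sm] by (intro suminf_le bnd sm2)
  also have "s * L powr (2 - \<beta>) = L\<^sup>2"
  proof (cases "s = 0")
    case False
    have "s \<ge> 0" unfolding s_def by (rule suminf_nonneg[OF sm]) simp
    with False have "s * L powr (2 - \<beta>) = s powr 1 * s powr ((2 - \<beta>) / \<beta>)"
      unfolding L_eq by (simp add: powr_powr)
    also have "\<dots> = s powr (1 / \<beta> + 1 / \<beta>)"
      unfolding powr_add[symmetric] using b by (simp add: field_simps)
    also have "\<dots> = L\<^sup>2"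
      unfolding L_eq power2_eq_square by (simp add: powr_add[symmetric])
    finally show ?thesis .
  qed (simp add: L_eq)
  finally show "(\<Sum>j. (lam j)\<^sup>2) \<le> (lp_norm \<beta> lam)\<^sup>2" unfolding L_def .
qed

section \<open>The coefficient matrix and its band decomposition\<close>

lemma fourier_coeff_sq_sum_le:
  assumes "orthonormal_system f"
  shows "(\<Sum>j<J. (norm (fourier_coeff (f j) n))\<^sup>2) \<le> 1 / (2 * pi)"
  using bessel_fourier_coeff_pairing[OF assms, where S = "{n}" and J = J and v = "\<lambda>_. 1"] by simp

lemma summable_weighted_coeff_products:
  assumes ons: "orthonormal_system f" and M: "\<And>j. \<bar>lam j\<bar> \<le> M"
  shows "summable (\<lambda>j. of_real (lam j) * (fourier_coeff (f j) n * cnj (fourier_coeff (f j) m)))"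
proof (rule summable_comparison_test'[where N = 0])
  have sq: "summable (\<lambda>j. (norm (fourier_coeff (f j) n))\<^sup>2)" for n
    using fourier_coeff_sq_sum_le[OF ons] by (intro summableI_nonneg_bounded) auto
  show "summable (\<lambda>j. M * ((norm (fourier_coeff (f j) n))\<^sup>2 + (norm (fourier_coeff (f j) m))\<^sup>2))"
    by (intro summable_mult summable_add sq)
  show "norm (of_real (lam j) * (fourier_coeff (f j) n * cnj (fourier_coeff (f j) m)))
      \<le> M * ((norm (fourier_coeff (f j) n))\<^sup>2 + (norm (fourier_coeff (f j) m))\<^sup>2)" for j
  proof -
    have "0 \<le> M" using M[of j] by linarith
    from mult_mono[OF M[of j] norm_mult_le_sum_squares[of "fourier_coeff (f j) n" "cnj (fourier_coeff (f j) m)"] this]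
    show ?thesis by (simp add: norm_mult)
  qed
qed

definition coef_matrix :: "(nat \<Rightarrow> real) \<Rightarrow> (nat \<Rightarrow> real \<Rightarrow> complex) \<Rightarrow> int \<Rightarrow> int \<Rightarrow> complex" where
  "coef_matrix lam f n m = (\<Sum>j. of_real (lam j) * (fourier_coeff (f j) n * cnj (fourier_coeff (f j) m)))"

lemma hilbert_schmidt_coef_matrix:
  assumes ons: "orthonormal_system f" and M: "\<And>j. \<bar>lam j\<bar> \<le> M"
    and sl: "summable (\<lambda>j. (lam j)\<^sup>2)" and S: "finite S"
  shows "(\<Sum>n\<in>S. \<Sum>m\<in>S. (norm (coef_matrix lam f n m))\<^sup>2) \<le> (\<Sum>j. (lam j)\<^sup>2) / (4 * pi\<^sup>2)"
proof (rule LIMSEQ_le_const2)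
  let ?A = "\<lambda>J n m. \<Sum>j<J. of_real (lam j) * (fourier_coeff (f j) n * cnj (fourier_coeff (f j) m))"
  have "(\<lambda>J. ?A J n m) \<longlonglongrightarrow> coef_matrix lam f n m" for n m
    unfolding coef_matrix_def by (rule summable_LIMSEQ[OF summable_weighted_coeff_products[OF ons M]])
  then show "(\<lambda>J. \<Sum>n\<in>S. \<Sum>m\<in>S. (norm (?A J n m))\<^sup>2) \<longlonglongrightarrow> (\<Sum>n\<in>S. \<Sum>m\<in>S. (norm (coef_matrix lam f n m))\<^sup>2)"
    by (intro tendsto_sum tendsto_power tendsto_norm)
  have "(\<Sum>n\<in>S. \<Sum>m\<in>S. (norm (?A J n m))\<^sup>2) \<le> (\<Sum>j. (lam j)\<^sup>2) / (4 * pi\<^sup>2)" for J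
  proof -
    have "(\<Sum>j<J. (norm (\<Sum>n\<in>S. fourier_coeff (f j) n * cnj (v n)))\<^sup>2)
        \<le> 1 / (2 * pi) * (\<Sum>n\<in>S. (norm (v n))\<^sup>2)" for J v
      using bessel_fourier_coeff_pairing[OF ons S] by simp
    then have "(\<Sum>n\<in>S. \<Sum>m\<in>S. (norm (?A J n m))\<^sup>2) \<le> (1 / (2 * pi))\<^sup>2 * (\<Sum>j<J. (lam j)\<^sup>2)"
      by (rule hilbert_schmidt_bound[rotated]) simp
    also have "\<dots> \<le> (1 / (2 * pi))\<^sup>2 * (\<Sum>j. (lam j)\<^sup>2)"
      by (intro mult_left_mono sum_le_suminf sl) auto
    finally show ?thesis by (simp add: power_divide power_mult_distrib)
  qed
  then show "\<exists>N. \<forall>J\<ge>N. (\<Sum>n\<in>S. \<Sum>m\<in>S. (norm (?A J n m))\<^sup>2) \<le> (\<Sum>j. (lam j)\<^sup>2) / (4 * pi\<^sup>2)"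
    by blast
qed

lemma finite_S_set: "finite (S_set N)"
  unfolding S_set_def by simp

definition plane_wave :: "real \<Rightarrow> real \<Rightarrow> int \<Rightarrow> complex" where
  "plane_wave t x n = exp (\<i> * of_real (x * of_int n + t * dispersion n))"

lemma norm_D_op_sq:
  "complex_of_real ((norm (D_op N g t x))\<^sup>2)
     = (\<Sum>n\<in>S_set N. \<Sum>m\<in>S_set N. (fourier_coeff g n * cnj (fourier_coeff g m))
          * (plane_wave t x n * cnj (plane_wave t x m))) / (4 * pi\<^sup>2)"
proof -
  have "D_op N g t x = (\<Sum>n\<in>S_set N. fourier_coeff g n * plane_wave t x n) / (2 * pi)"
    unfolding D_op_def plane_wave_def dispersion_def by simp
  then show ?thesis
    unfolding complex_norm_square
    by (simp add: cnj_sum sum_product sum_divide_distrib power2_eq_square mult_ac)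
qed

definition band_set :: "nat \<Rightarrow> int set" where
  "band_set N = {- 2 * int N .. 2 * int N}"

definition band_coef :: "nat \<Rightarrow> (nat \<Rightarrow> real) \<Rightarrow> (nat \<Rightarrow> real \<Rightarrow> complex) \<Rightarrow> int \<Rightarrow> int \<Rightarrow> complex" where
  "band_coef N lam f k n = (if n - k \<in> S_set N then coef_matrix lam f n (n - k) else 0)"

definition band_wave :: "nat \<Rightarrow> (nat \<Rightarrow> real) \<Rightarrow> (nat \<Rightarrow> real \<Rightarrow> complex) \<Rightarrow> int \<Rightarrow> real \<Rightarrow> complex" where
  "band_wave N lam f k t = (\<Sum>n\<in>S_set N. band_coef N lam f k n * exp (\<i> * of_real (t * phase_gap k n)))"

lemma finite_band_set: "finite (band_set N)"
  unfolding band_set_def by simp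

lemma sum_pairs_S_set_by_bands:
  "(\<Sum>n\<in>S_set N. \<Sum>m\<in>S_set N. F n m)
     = (\<Sum>k\<in>band_set N. \<Sum>n\<in>S_set N. if n - k \<in> S_set N then F n (n - k) else 0)"
  by (rule sum_pairs_by_differences) (auto simp: finite_S_set finite_band_set band_set_def S_set_def)

lemma coef_matrix_band_expansion:
  "(\<Sum>n\<in>S_set N. \<Sum>m\<in>S_set N. coef_matrix lam f n m * (plane_wave t x n * cnj (plane_wave t x m)))
     = (\<Sum>k\<in>band_set N. exp (\<i> * of_real (x * of_int k)) * band_wave N lam f k t)"
proof -
  have "plane_wave t x n * cnj (plane_wave t x (n - k))
      = exp (\<i> * of_real (x * of_int k)) * exp (\<i> * of_real (t * phase_gap k n))" for n k
    unfolding plane_wave_def phase_gap_def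
    by (simp add: exp_cnj exp_add[symmetric] algebra_simps)
  then show ?thesis
    unfolding sum_pairs_S_set_by_bands band_wave_def band_coef_def sum_distrib_left
    by (intro sum.cong refl) (simp add: mult_ac)
qed

lemma sum_norm_band_coef_sq:
  "(\<Sum>k\<in>band_set N. \<Sum>n\<in>S_set N. (norm (band_coef N lam f k n))\<^sup>2)
     = (\<Sum>n\<in>S_set N. \<Sum>m\<in>S_set N. (norm (coef_matrix lam f n m))\<^sup>2)"
  unfolding sum_pairs_S_set_by_bands band_coef_def by (intro sum.cong refl) simp

lemma density_eq_band_expansion:
  assumes ons: "orthonormal_system f" and M: "\<And>j. \<bar>lam j\<bar> \<le> M"
  shows "(\<Sum>j. lam j * (norm (D_op N (f j) t x))\<^sup>2)
     = Re (\<Sum>k\<in>band_set N. exp (\<i> * of_real (x * of_int k)) * band_wave N lam f k t) / (4 * pi\<^sup>2)"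
proof -
  let ?w = "\<lambda>n m. plane_wave t x n * cnj (plane_wave t x m)"
  have "(\<lambda>j. (\<Sum>n\<in>S_set N. \<Sum>m\<in>S_set N.
        of_real (lam j) * (fourier_coeff (f j) n * cnj (fourier_coeff (f j) m)) * ?w n m) / (4 * pi\<^sup>2))
      sums ((\<Sum>n\<in>S_set N. \<Sum>m\<in>S_set N. coef_matrix lam f n m * ?w n m) / (4 * pi\<^sup>2))"
    unfolding coef_matrix_def
    by (intro sums_divide sums_sum sums_mult2 summable_sums summable_weighted_coeff_products[OF ons M])
  moreover have "complex_of_real (lam j * (norm (D_op N (f j) t x))\<^sup>2)
      = (\<Sum>n\<in>S_set N. \<Sum>m\<in>S_set N.
          of_real (lam j) * (fourier_coeff (f j) n * cnj (fourier_coeff (f j) m)) * ?w n m) / (4 * pi\<^sup>2)" for j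
    unfolding of_real_mult norm_D_op_sq by (simp add: sum_distrib_left sum_divide_distrib mult_ac)
  ultimately have "(\<lambda>j. complex_of_real (lam j * (norm (D_op N (f j) t x))\<^sup>2))
      sums ((\<Sum>k\<in>band_set N. exp (\<i> * of_real (x * of_int k)) * band_wave N lam f k t) / (4 * pi\<^sup>2))"
    by (simp only: coef_matrix_band_expansion)
  then have "(\<lambda>j. lam j * (norm (D_op N (f j) t x))\<^sup>2)
      sums Re ((\<Sum>k\<in>band_set N. exp (\<i> * of_real (x * of_int k)) * band_wave N lam f k t) / (4 * pi\<^sup>2))"
    using sums_Re by fastforce
  then show ?thesis by (simp add: sums_unique[symmetric] Re_divide_numeral)
qed

section \<open>The L2 in time, L-infinity in space estimate\<close>

lemma abs_density_le:
  assumes "orthonormal_system f" and "\<And>j. \<bar>lam j\<bar> \<le> M"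
  shows "\<bar>\<Sum>j. lam j * (norm (D_op N (f j) t x))\<^sup>2\<bar>
     \<le> (\<Sum>k\<in>band_set N. norm (band_wave N lam f k t)) / (4 * pi\<^sup>2)"
proof -
  let ?V = "\<Sum>k\<in>band_set N. exp (\<i> * of_real (x * of_int k)) * band_wave N lam f k t"
  have "\<bar>Re ?V\<bar> \<le> norm ?V" by (rule abs_Re_le_cmod)
  also have "\<dots> \<le> (\<Sum>k\<in>band_set N. norm (exp (\<i> * of_real (x * of_int k)) * band_wave N lam f k t))"
    by (rule norm_sum)
  also have "\<dots> = (\<Sum>k\<in>band_set N. norm (band_wave N lam f k t))"
    by (simp add: norm_mult)
  finally have "\<bar>Re ?V\<bar> \<le> (\<Sum>k\<in>band_set N. norm (band_wave N lam f k t))" .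
  then show ?thesis
    unfolding density_eq_band_expansion[OF assms] by (simp add: divide_right_mono)
qed

lemma esssup_density_le:
  assumes ons: "orthonormal_system f" and M: "\<And>j. \<bar>lam j\<bar> \<le> M"
  shows "esssup (restrict_space lborel torus) (\<lambda>x. ennreal \<bar>\<Sum>j. lam j * (norm (D_op N (f j) t x))\<^sup>2\<bar>)
     \<le> ennreal ((\<Sum>k\<in>band_set N. norm (band_wave N lam f k t)) / (4 * pi\<^sup>2))"
proof (rule esssup_I)
  have [measurable]: "(\<lambda>x. \<Sum>k\<in>band_set N. exp (\<i> * of_real (x * of_int k)) * band_wave N lam f k t)
      \<in> borel_measurable borel"
    by (intro borel_measurable_continuous_onI continuous_intros)
  show "(\<lambda>x. ennreal \<bar>\<Sum>j. lam j * (norm (D_op N (f j) t x))\<^sup>2\<bar>) \<in> borel_measurable (restrict_space lborel torus)"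
    unfolding density_eq_band_expansion[OF ons M] by (rule measurable_restrict_space1) simp
  show "AE x in restrict_space lborel torus. ennreal \<bar>\<Sum>j. lam j * (norm (D_op N (f j) t x))\<^sup>2\<bar>
      \<le> ennreal ((\<Sum>k\<in>band_set N. norm (band_wave N lam f k t)) / (4 * pi\<^sup>2))"
    using abs_density_le[OF ons M] by (intro AE_I2 ennreal_leI)
qed

lemma L2Linf_norm_sq_le_integral:
  assumes sup_le: "\<And>t. t \<in> torus \<Longrightarrow> esssup (restrict_space lborel torus) (\<lambda>x. ennreal \<bar>F t x\<bar>) \<le> ennreal (B t)"
    and B_nonneg: "\<And>t. 0 \<le> B t" and B_cont: "continuous_on {0..2 * pi} B"
  shows "L2Linf_norm_sq F \<le> ennreal (integral {0..2 * pi} (\<lambda>t. (B t)\<^sup>2))"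
proof -
  have "L2Linf_norm_sq F \<le> (\<integral>\<^sup>+ t. ennreal (indicator {0..2 * pi} t * (B t)\<^sup>2) \<partial>lborel)"
    unfolding L2Linf_norm_sq_def
  proof (rule nn_integral_mono)
    fix t
    show "indicator torus t * (esssup (restrict_space lborel torus) (\<lambda>x. ennreal \<bar>F t x\<bar>))\<^sup>2
        \<le> ennreal (indicator {0..2 * pi} t * (B t)\<^sup>2)"
    proof (cases "t \<in> torus")
      case True
      then have "(esssup (restrict_space lborel torus) (\<lambda>x. ennreal \<bar>F t x\<bar>))\<^sup>2 \<le> ennreal ((B t)\<^sup>2)"
        using power_mono[OF sup_le, of t 2] B_nonneg by (simp add: ennreal_power)
      then show ?thesis using True by (simp add: torus_def)
    qed simp
  qed
  also have "\<dots> = ennreal (integral {0..2 * pi} (\<lambda>t. (B t)\<^sup>2))"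
    using B_cont B_nonneg
    by (intro nn_integral_has_integral_lebesgue integrable_integral integrable_continuous_interval
        continuous_intros) auto
  finally show ?thesis .
qed

(* Row-sum bound for the Gram matrix of band k: the diagonal contributes 2 pi, and since the
   phases are |k|-separated the off-diagonal entries are at most 2/(|k| |n - n'|), whose sum
   over n' is at most 4 sqrt (2N) * 2/|k|. *)
definition band_weight :: "nat \<Rightarrow> int \<Rightarrow> real" where
  "band_weight N k =
     (if k = 0 then 2 * pi * (2 * real N + 1) else 2 * pi + 8 * sqrt (2 * real N) / of_int \<bar>k\<bar>)"

lemma band_weight_pos: "0 < band_weight N k"
  unfolding band_weight_def by (auto intro!: add_pos_nonneg)

lemma sum_norm_osc_integral_phase_gap_le:
  assumes n: "n \<in> S_set N"
  shows "(\<Sum>n'\<in>S_set N. norm (osc_integral (phase_gap k n - phase_gap k n'))) \<le> band_weight N k"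
proof (cases "k = 0")
  case True
  have "(\<Sum>n'\<in>S_set N. norm (osc_integral (phase_gap k n - phase_gap k n'))) \<le> of_nat (card (S_set N)) * (2 * pi)"
    by (rule sum_bounded_above) (rule norm_osc_integral_le)
  then show ?thesis using True by (simp add: band_weight_def S_set_def algebra_simps)
next
  case False
  have off_diag: "norm (osc_integral (phase_gap k n - phase_gap k n')) \<le> (2 / of_int \<bar>k\<bar>) * (1 / real_of_int \<bar>n - n'\<bar>)"
    if "n' \<in> S_set N - {n}" for n'
  proof -
    have pos: "0 < real_of_int (\<bar>k\<bar> * \<bar>n - n'\<bar>)" using that False by auto
    have sep: "real_of_int (\<bar>k\<bar> * \<bar>n - n'\<bar>) \<le> \<bar>phase_gap k n - phase_gap k n'\<bar>"
      by (rule phase_gap_separated)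
    with pos have "phase_gap k n - phase_gap k n' \<noteq> 0" by auto
    then have "norm (osc_integral (phase_gap k n - phase_gap k n')) \<le> 2 / \<bar>phase_gap k n - phase_gap k n'\<bar>"
      by (rule norm_osc_integral_le_inverse)
    also have "\<dots> \<le> 2 / real_of_int (\<bar>k\<bar> * \<bar>n - n'\<bar>)"
      using sep pos by (intro divide_left_mono) auto
    finally show ?thesis by simp
  qed  have "(\<Sum>n'\<in>S_set N. norm (osc_integral (phase_gap k n - phase_gap k n')))
      = norm (osc_integral 0) + (\<Sum>n'\<in>S_set N - {n}. norm (osc_integral (phase_gap k n - phase_gap k n')))"
    using sum.remove[OF finite_S_set n, of "\<lambda>n'. norm (osc_integral (phase_gap k n - phase_gap k n'))"] by simp
  also have "\<dots> \<le> 2 * pi + (2 / of_int \<bar>k\<bar>) * (\<Sum>n'\<in>S_set N - {n}. 1 / real_of_int \<bar>n - n'\<bar>)"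
    unfolding sum_distrib_left by (intro add_mono norm_osc_integral_le sum_mono off_diag)
  also have "\<dots> \<le> 2 * pi + (2 / of_int \<bar>k\<bar>) * (4 * sqrt (real (2 * N)))"
    using sum_inverse_distance_le[OF finite_S_set, where M = "2 * N" and n = n] n
    by (intro add_left_mono mult_left_mono) (auto simp: S_set_def)
  finally show ?thesis using False by (simp add: band_weight_def)
qed

lemma integral_norm_band_wave_sq_le:
  "integral {0..2 * pi} (\<lambda>t. (norm (band_wave N lam f k t))\<^sup>2)
     \<le> band_weight N k * (\<Sum>n\<in>S_set N. (norm (band_coef N lam f k n))\<^sup>2)"
  unfolding band_wave_def
  by (rule integral_norm_exp_sum_sq_le[OF finite_S_set sum_norm_osc_integral_phase_gap_le])

lemma sum_band_weight_le:
  assumes "N \<ge> 1"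
  shows "(\<Sum>k\<in>band_set N. band_weight N k) \<le> 120 * real N"
proof -
  have z: "0 \<in> band_set N" unfolding band_set_def by simp
  have card: "card (band_set N - {0}) = 4 * N"
    using z finite_band_set unfolding band_set_def by (simp add: card_Diff_singleton)
  have "(\<Sum>k\<in>band_set N - {0}. band_weight N k)
      = (\<Sum>k\<in>band_set N - {0}. 2 * pi + 8 * sqrt (2 * real N) * (1 / real_of_int \<bar>0 - k\<bar>))"
    by (intro sum.cong refl) (auto simp: band_weight_def)
  also have "\<dots> = 2 * pi * real (4 * N) + 8 * sqrt (2 * real N) * (\<Sum>k\<in>band_set N - {0}. 1 / real_of_int \<bar>0 - k\<bar>)"
    by (simp add: sum.distrib sum_distrib_left card)
  also have "\<dots> \<le> 2 * pi * real (4 * N) + 8 * sqrt (2 * real N) * (4 * sqrt (real (2 * N)))"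
    using sum_inverse_distance_le[OF finite_band_set, where M = "2 * N" and n = 0]
    by (intro add_left_mono mult_left_mono) (auto simp: band_set_def)
  also have "\<dots> = 8 * pi * real N + 64 * real N"
    using real_sqrt_mult_self[of "2 * real N"] by (simp add: algebra_simps)
  finally have "(\<Sum>k\<in>band_set N. band_weight N k) \<le> 2 * pi * (2 * real N + 1) + 8 * pi * real N + 64 * real N"
    using sum.remove[OF finite_band_set z, of "band_weight N"] by (simp add: band_weight_def)
  also have "\<dots> \<le> 120 * real N"
  proof -
    have "pi * real N \<le> 4 * real N" using pi_less_4 by (intro mult_right_mono) auto
    moreover have "pi \<le> 4" using pi_less_4 by simp
    moreover have "1 \<le> real N" using assms by simp
    moreover have "2 * pi * (2 * real N + 1) + 8 * pi * real N = 12 * (pi * real N) + 2 * pi"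
      by (simp add: algebra_simps)
    ultimately show ?thesis by linarith
  qed
  finally show ?thesis .
qed

lemma sum_sq_le_weighted:
  fixes a w :: "'a \<Rightarrow> real"
  assumes "\<And>k. k \<in> K \<Longrightarrow> 0 < w k"
  shows "(\<Sum>k\<in>K. a k)\<^sup>2 \<le> (\<Sum>k\<in>K. w k) * (\<Sum>k\<in>K. (a k)\<^sup>2 / w k)"
proof -
  have "(\<Sum>k\<in>K. a k) = (\<Sum>k\<in>K. sqrt (w k) * (a k / sqrt (w k)))"
    using assms by (intro sum.cong refl) (metis less_numeral_extra(3) nonzero_mult_div_cancel_left real_sqrt_gt_0_iff times_divide_eq_right)
  also have "\<dots>\<^sup>2 \<le> (\<Sum>k\<in>K. (sqrt (w k))\<^sup>2) * (\<Sum>k\<in>K. (a k / sqrt (w k))\<^sup>2)"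
    by (rule Cauchy_Schwarz_ineq_sum)
  also have "\<dots> = (\<Sum>k\<in>K. w k) * (\<Sum>k\<in>K. (a k)\<^sup>2 / w k)"
    using assms by (intro arg_cong2[where f = "(*)"] sum.cong refl) (simp_all add: power_divide less_imp_le)
  finally show ?thesis .
qed

lemma continuous_on_band_wave: "continuous_on S (band_wave N lam f k)"
  unfolding band_wave_def by (intro continuous_intros)

lemma integral_sum_norm_band_wave_sq_le:
  "integral {0..2 * pi} (\<lambda>t. (\<Sum>k\<in>band_set N. norm (band_wave N lam f k t))\<^sup>2)
     \<le> (\<Sum>k\<in>band_set N. band_weight N k) * (\<Sum>n\<in>S_set N. \<Sum>m\<in>S_set N. (norm (coef_matrix lam f n m))\<^sup>2)"
proof -
  let ?W = "\<Sum>k\<in>band_set N. band_weight N k"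
  have int: "(\<lambda>t. (norm (band_wave N lam f k t))\<^sup>2 / band_weight N k) integrable_on {0..2 * pi}" for k
    by (intro integrable_continuous_interval continuous_intros continuous_on_band_wave)
      (simp add: band_weight_pos less_imp_neq[symmetric])
  have "integral {0..2 * pi} (\<lambda>t. (\<Sum>k\<in>band_set N. norm (band_wave N lam f k t))\<^sup>2)
      \<le> integral {0..2 * pi} (\<lambda>t. ?W * (\<Sum>k\<in>band_set N. (norm (band_wave N lam f k t))\<^sup>2 / band_weight N k))"
    using band_weight_pos int finite_band_set
    by (intro integral_le sum_sq_le_weighted integrable_continuous_interval continuous_intros
        continuous_on_band_wave integrable_cmul integrable_sum)
      (auto simp: band_weight_pos[THEN less_imp_neq, symmetric])
  also have "\<dots> = ?W * (\<Sum>k\<in>band_set N. integral {0..2 * pi} (\<lambda>t. (norm (band_wave N lam f k t))\<^sup>2) / band_weight N k)"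
    by (simp add: integral_sum[OF finite_band_set int])
  also have "\<dots> \<le> ?W * (\<Sum>k\<in>band_set N. \<Sum>n\<in>S_set N. (norm (band_coef N lam f k n))\<^sup>2)"
    using integral_norm_band_wave_sq_le band_weight_pos
    by (intro mult_left_mono sum_mono sum_nonneg) (auto simp: divide_le_eq mult.commute less_imp_le)
  finally show ?thesis by (simp only: sum_norm_band_coef_sq)
qed

lemma divide_le_self_real: "0 \<le> a \<Longrightarrow> 1 \<le> c \<Longrightarrow> a / c \<le> (a::real)"
  using mult_left_mono[of 1 c a] by (simp add: divide_le_eq)

lemma L2Linf_norm_sq_density_le:
  assumes ons: "orthonormal_system f" and M: "\<And>j. \<bar>lam j\<bar> \<le> M"
  shows "L2Linf_norm_sq (\<lambda>t x. \<Sum>j. lam j * (norm (D_op N (f j) t x))\<^sup>2)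
     \<le> ennreal ((\<Sum>k\<in>band_set N. band_weight N k)
                 * (\<Sum>n\<in>S_set N. \<Sum>m\<in>S_set N. (norm (coef_matrix lam f n m))\<^sup>2))"
proof -
  let ?\<Sigma> = "\<lambda>t. \<Sum>k\<in>band_set N. norm (band_wave N lam f k t)"
  have "1 \<le> pi\<^sup>2" using one_le_power[of pi 2] pi_gt3 by simp
  then have pi_sq: "1 \<le> 4 * pi\<^sup>2" by simp
  have "L2Linf_norm_sq (\<lambda>t x. \<Sum>j. lam j * (norm (D_op N (f j) t x))\<^sup>2)
      \<le> ennreal (integral {0..2 * pi} (\<lambda>t. (?\<Sigma> t / (4 * pi\<^sup>2))\<^sup>2))"
    by (rule L2Linf_norm_sq_le_integral[OF esssup_density_le[OF ons M]])
      (auto intro!: divide_nonneg_pos sum_nonneg continuous_intros continuous_on_band_wave)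
  also have "integral {0..2 * pi} (\<lambda>t. (?\<Sigma> t / (4 * pi\<^sup>2))\<^sup>2) \<le> integral {0..2 * pi} (\<lambda>t. (?\<Sigma> t)\<^sup>2)"
  proof (intro integral_le integrable_continuous_interval continuous_intros continuous_on_band_wave)
    show "(?\<Sigma> t / (4 * pi\<^sup>2))\<^sup>2 \<le> (?\<Sigma> t)\<^sup>2" for t
      using pi_sq by (intro power_mono divide_le_self_real divide_nonneg_pos sum_nonneg) auto
  qed simp
  also have "\<dots> \<le> (\<Sum>k\<in>band_set N. band_weight N k)
      * (\<Sum>n\<in>S_set N. \<Sum>m\<in>S_set N. (norm (coef_matrix lam f n m))\<^sup>2)"
    by (rule integral_sum_norm_band_wave_sq_le)
  finally show ?thesis by (simp add: ennreal_leI order_trans)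
qed

lemma hilbert_schmidt_coef_matrix_le_lp_norm:
  assumes "0 < \<beta>" "\<beta> \<le> 2" and lp: "in_lp \<beta> lam" and ons: "orthonormal_system f" and "finite S"
  shows "(\<Sum>n\<in>S. \<Sum>m\<in>S. (norm (coef_matrix lam f n m))\<^sup>2) \<le> (lp_norm \<beta> lam)\<^sup>2"
proof -
  have "1 \<le> pi\<^sup>2" using one_le_power[of pi 2] pi_gt3 by simp
  have "(\<Sum>n\<in>S. \<Sum>m\<in>S. (norm (coef_matrix lam f n m))\<^sup>2) \<le> (\<Sum>j. (lam j)\<^sup>2) / (4 * pi\<^sup>2)"
    using assms abs_le_lp_norm l2_le_lp_norm(1) by (intro hilbert_schmidt_coef_matrix) auto
  also have "\<dots> \<le> (\<Sum>j. (lam j)\<^sup>2)"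
    using \<open>1 \<le> pi\<^sup>2\<close> suminf_nonneg[OF l2_le_lp_norm(1)[OF assms(1,2) lp]]
    by (intro divide_le_self_real) auto
  also have "\<dots> \<le> (lp_norm \<beta> lam)\<^sup>2" by (rule l2_le_lp_norm(2)[OF assms(1,2) lp])
  finally show ?thesis .
qed

theorem theorem1p6:
  fixes \<beta> :: real
  assumes "0 < \<beta>" and "\<beta> \<le> 2"
  shows "\<exists>C. \<forall>(N::nat) (lam::nat \<Rightarrow> real) (f::nat \<Rightarrow> real \<Rightarrow> complex).
           N \<ge> 1 \<longrightarrow> in_lp \<beta> lam \<longrightarrow> orthonormal_system f \<longrightarrow>
           L2Linf_norm_sq (\<lambda>t x. \<Sum>j. lam j * (norm (D_op N (f j) t x))\<^sup>2)
             \<le> ennreal ((C * sqrt (real N) * lp_norm \<beta> lam)\<^sup>2)"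
proof (intro exI allI impI)
  fix N :: nat and lam :: "nat \<Rightarrow> real" and f :: "nat \<Rightarrow> real \<Rightarrow> complex"
  assume N: "N \<ge> 1" and lp: "in_lp \<beta> lam" and ons: "orthonormal_system f"
  have "L2Linf_norm_sq (\<lambda>t x. \<Sum>j. lam j * (norm (D_op N (f j) t x))\<^sup>2)
      \<le> ennreal ((\<Sum>k\<in>band_set N. band_weight N k)
                  * (\<Sum>n\<in>S_set N. \<Sum>m\<in>S_set N. (norm (coef_matrix lam f n m))\<^sup>2))"
    by (rule L2Linf_norm_sq_density_le[OF ons abs_le_lp_norm[OF assms(1) lp]])
  also have "\<dots> \<le> ennreal ((120 * real N) * (lp_norm \<beta> lam)\<^sup>2)"
    by (intro ennreal_leI mult_mono sum_band_weight_le[OF N] sum_nonneg finite_S_set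
        hilbert_schmidt_coef_matrix_le_lp_norm[OF assms lp ons]) auto
  also have "(120 * real N) * (lp_norm \<beta> lam)\<^sup>2 = (sqrt 120 * sqrt (real N) * lp_norm \<beta> lam)\<^sup>2"
    by (simp add: power_mult_distrib)
  finally show "L2Linf_norm_sq (\<lambda>t x. \<Sum>j. lam j * (norm (D_op N (f j) t x))\<^sup>2)
      \<le> ennreal ((sqrt 120 * sqrt (real N) * lp_norm \<beta> lam)\<^sup>2)" .
qed

end
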